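(* Let a preference profile with $n$ men and $n$ women be given. If some stable matching of this profile contains a hell-couple consisting of man $A$ and woman $Z$, then every stable matching of this profile matches $A$ with $Z$.
   Context: Each of $n$ men strictly ranks the $n$ women by a bijection to $\{1,\dots,n\}$ (1 = favorite, $n$ = least favorite), and each woman strictly ranks the $n$ men likewise. A matching is a perfect pairing of men with women. A matching is stable if there is no man $M$ and woman $W$, not matched to each other, such that each prefers the other to their assigned partner. A hell-pair is a man and a woman who rank each other $n$ (last); a hell-couple in a matching is a hell-pair who are matched to each other. *)

theory Defs
  imports Main
begin

text \<open>Men and women are both indexed by {0..<n}. mp m w is the rank man m gives woman w,
  wp w m is the rank woman w gives man m (1 = favourite, n = least favourite).\<close>

definition preference_profile :: "nat \<Rightarrow> (nat \<Rightarrow> nat \<Rightarrow> nat) \<Rightarrow> (nat \<Rightarrow> nat \<Rightarrow> nat) \<Rightarrow> bool" where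
  "preference_profile n mp wp \<longleftrightarrow>
     (\<forall>m<n. bij_betw (mp m) {0..<n} {1..n}) \<and> (\<forall>w<n. bij_betw (wp w) {0..<n} {1..n})"

definition matching :: "nat \<Rightarrow> (nat \<Rightarrow> nat) \<Rightarrow> bool" where
  "matching n mu \<longleftrightarrow> bij_betw mu {0..<n} {0..<n}"

definition stable :: "nat \<Rightarrow> (nat \<Rightarrow> nat \<Rightarrow> nat) \<Rightarrow> (nat \<Rightarrow> nat \<Rightarrow> nat) \<Rightarrow> (nat \<Rightarrow> nat) \<Rightarrow> bool" where
  "stable n mp wp mu \<longleftrightarrow> matching n mu \<and>
     \<not> (\<exists>m<n. \<exists>w<n. \<exists>m'<n. mu m' = w \<and> mu m \<noteq> w \<and>
            mp m w < mp m (mu m) \<and> wp w m < wp w m')"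

definition hell_pair :: "nat \<Rightarrow> (nat \<Rightarrow> nat \<Rightarrow> nat) \<Rightarrow> (nat \<Rightarrow> nat \<Rightarrow> nat) \<Rightarrow> nat \<Rightarrow> nat \<Rightarrow> bool" where
  "hell_pair n mp wp m w \<longleftrightarrow> m < n \<and> w < n \<and> mp m w = n \<and> wp w m = n"

definition hell_couple :: "nat \<Rightarrow> (nat \<Rightarrow> nat \<Rightarrow> nat) \<Rightarrow> (nat \<Rightarrow> nat \<Rightarrow> nat) \<Rightarrow> (nat \<Rightarrow> nat) \<Rightarrow> nat \<Rightarrow> nat \<Rightarrow> bool" where
  "hell_couple n mp wp mu m w \<longleftrightarrow> hell_pair n mp wp m w \<and> mu m = w"

end

theory Submission
  imports Defs
begin

text \<open>Let \<mu> and \<nu> be stable matchings and let M be the set of men who strictly prefer their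
  \<nu>-partner to their \<mu>-partner. If m \<in> M, then stability of \<mu> forces the woman \<nu> m to strictly
  prefer her \<mu>-partner m' to m; stability of \<nu> then forces m' to prefer his \<nu>-partner to \<nu> m,
  so m' \<in> M. Hence \<nu> maps M into \<mu>(M), and by counting \<nu>(M) = \<mu>(M). If the hell couple (A, Z)
  of \<mu> were split in \<nu>, then A \<in> M, since every woman is better for A than Z. So Z = \<nu> m for
  some m \<in> M, and Z would strictly prefer A to m, impossible as A is her last choice.\<close>

lemma preference_profile_inj:
  assumes "preference_profile n mp wp"
  shows "m < n \<Longrightarrow> inj_on (mp m) {0..<n}" and "w < n \<Longrightarrow> inj_on (wp w) {0..<n}"
  using assms by (auto simp: preference_profile_def bij_betw_def)

lemma preference_profile_rank_le:
  assumes "preference_profile n mp wp"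
  shows "m < n \<Longrightarrow> w < n \<Longrightarrow> mp m w \<le> n" and "w < n \<Longrightarrow> m < n \<Longrightarrow> wp w m \<le> n"
  using assms by (auto simp: preference_profile_def dest!: bij_betw_apply)

lemma stable_imp_bij_betw: "stable n mp wp mu \<Longrightarrow> bij_betw mu {0..<n} {0..<n}"
  by (simp add: stable_def matching_def)

lemma stable_no_blocking_pair:
  assumes "stable n mp wp mu" "m < n" "m' < n" "mu m \<noteq> mu m'"
    and "mp m (mu m') < mp m (mu m)"
  shows "wp (mu m') m' \<le> wp (mu m') m"
proof -
  have "mu m' < n"
    using stable_imp_bij_betw[OF assms(1)] \<open>m' < n\<close> by (auto dest: bij_betw_apply)
  then have "\<not> (mp m (mu m') < mp m (mu m) \<and> wp (mu m') m < wp (mu m') m')"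
    using assms unfolding stable_def by blast
  then show ?thesis
    using assms(5) by simp
qed

definition improving_men :: "nat \<Rightarrow> (nat \<Rightarrow> nat \<Rightarrow> nat) \<Rightarrow> (nat \<Rightarrow> nat) \<Rightarrow> (nat \<Rightarrow> nat) \<Rightarrow> nat set"
  where "improving_men n mp mu nu = {m. m < n \<and> mp m (nu m) < mp m (mu m)}"

lemma improving_man_partner_prefers_old_partner:
  assumes "preference_profile n mp wp" "stable n mp wp mu"
    and "m \<in> improving_men n mp mu nu" "m' < n" "mu m' = nu m"
  shows "wp (nu m) m' < wp (nu m) m"
proof -
  have "m < n" and improves: "mp m (mu m') < mp m (mu m)"
    using assms(3,5) by (auto simp: improving_men_def)
  then have "m \<noteq> m'" "mu m \<noteq> mu m'" by auto
  have "nu m < n"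
    using bij_betw_apply[OF stable_imp_bij_betw[OF assms(2)], of m'] assms(4,5) by simp
  have "wp (nu m) m' \<le> wp (nu m) m"
    using stable_no_blocking_pair[OF assms(2) \<open>m < n\<close> \<open>m' < n\<close> \<open>mu m \<noteq> mu m'\<close> improves] assms(5)
    by simp
  moreover have "wp (nu m) m' \<noteq> wp (nu m) m"
    using inj_on_eq_iff[OF preference_profile_inj(2)[OF assms(1) \<open>nu m < n\<close>], of m' m]
      \<open>m < n\<close> \<open>m' < n\<close> \<open>m \<noteq> m'\<close> by simp
  ultimately show ?thesis by simp
qed

lemma improving_men_closed:
  assumes "preference_profile n mp wp" "stable n mp wp mu" "stable n mp wp nu"
    and "m \<in> improving_men n mp mu nu" "m' < n" "mu m' = nu m"
  shows "m' \<in> improving_men n mp mu nu"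
proof -
  have "m < n" "m \<noteq> m'"
    using assms(4,6) by (auto simp: improving_men_def)
  have nu: "bij_betw nu {0..<n} {0..<n}"
    using stable_imp_bij_betw[OF assms(3)] .
  have "nu m' \<noteq> nu m"
    using inj_on_eq_iff[OF bij_betw_imp_inj_on[OF nu], of m' m] \<open>m < n\<close> \<open>m' < n\<close> \<open>m \<noteq> m'\<close> by simp
  have "nu m < n" "nu m' < n"
    using bij_betw_apply[OF nu] \<open>m < n\<close> \<open>m' < n\<close> by auto
  have "wp (nu m) m' < wp (nu m) m"
    using improving_man_partner_prefers_old_partner[OF assms(1,2,4,5,6)] .
  then have "\<not> mp m' (nu m) < mp m' (nu m')"
    using stable_no_blocking_pair[OF assms(3) \<open>m' < n\<close> \<open>m < n\<close> \<open>nu m' \<noteq> nu m\<close>] by linarith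
  moreover have "mp m' (nu m') \<noteq> mp m' (nu m)"
    using inj_on_eq_iff[OF preference_profile_inj(1)[OF assms(1) \<open>m' < n\<close>], of "nu m'" "nu m"]
      \<open>nu m < n\<close> \<open>nu m' < n\<close> \<open>nu m' \<noteq> nu m\<close> by simp
  ultimately show ?thesis
    using \<open>m' < n\<close> assms(6) by (simp add: improving_men_def)
qed

lemma improving_men_image_eq:
  assumes "preference_profile n mp wp" "stable n mp wp mu" "stable n mp wp nu"
  shows "nu ` improving_men n mp mu nu = mu ` improving_men n mp mu nu"
proof -
  let ?M = "improving_men n mp mu nu"
  have M: "?M \<subseteq> {0..<n}" "finite ?M"
    by (auto simp: improving_men_def)
  have mu: "bij_betw mu {0..<n} {0..<n}" and nu: "bij_betw nu {0..<n} {0..<n}"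
    using assms(2,3) by (simp_all add: stable_imp_bij_betw)
  have "nu ` ?M \<subseteq> mu ` ?M"
  proof
    fix w assume "w \<in> nu ` ?M"
    then obtain m where "m \<in> ?M" "w = nu m" by blast
    then have "w \<in> mu ` {0..<n}"
      using M(1) bij_betw_apply[OF nu] bij_betw_imp_surj_on[OF mu] by auto
    then obtain m' where "m' < n" "mu m' = w"
      by auto
    then show "w \<in> mu ` ?M"
      using improving_men_closed[OF assms \<open>m \<in> ?M\<close>] \<open>w = nu m\<close> by blast
  qed
  moreover have "card (nu ` ?M) = card (mu ` ?M)"
    using card_image[OF inj_on_subset[OF bij_betw_imp_inj_on[OF mu] M(1)]]
      card_image[OF inj_on_subset[OF bij_betw_imp_inj_on[OF nu] M(1)]] by simp
  ultimately show ?thesis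
    using M(2) by (simp add: card_subset_eq)
qed

theorem mainTheorem7:
  fixes n :: nat and mp wp :: "nat \<Rightarrow> nat \<Rightarrow> nat" and mu nu :: "nat \<Rightarrow> nat" and A Z :: nat
  assumes "preference_profile n mp wp"
    and "stable n mp wp mu"
    and "hell_couple n mp wp mu A Z"
    and "stable n mp wp nu"
  shows "nu A = Z"
proof (rule ccontr)
  assume "nu A \<noteq> Z"
  let ?M = "improving_men n mp mu nu"
  have hell: "A < n" "Z < n" "mp A Z = n" "wp Z A = n" "mu A = Z"
    using assms(3) by (auto simp: hell_couple_def hell_pair_def)
  have "nu A < n"
    using bij_betw_apply[OF stable_imp_bij_betw[OF assms(4)]] hell(1) by simp
  then have "mp A (nu A) \<noteq> mp A Z"
    using inj_on_eq_iff[OF preference_profile_inj(1)[OF assms(1) hell(1)], of "nu A" Z]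
      hell(2) \<open>nu A \<noteq> Z\<close> by simp
  then have "mp A (nu A) < mp A (mu A)"
    using preference_profile_rank_le(1)[OF assms(1) hell(1) \<open>nu A < n\<close>] hell by simp
  then have "Z \<in> mu ` ?M"
    using hell by (auto simp: improving_men_def)
  then obtain m where "m \<in> ?M" "nu m = Z"
    using improving_men_image_eq[OF assms(1,2,4)] by (metis imageE)
  then have "wp Z A < wp Z m"
    using improving_man_partner_prefers_old_partner[OF assms(1,2) \<open>m \<in> ?M\<close> hell(1)] hell by simp
  moreover have "wp Z m \<le> n"
    using preference_profile_rank_le(2)[OF assms(1) hell(2)] \<open>m \<in> ?M\<close> by (simp add: improving_men_def)
  ultimately show False
    using hell by simp
qed

end
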